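(* Let $1<K<n$, $\|\cdot\|_s$ a sign- and permutation-invariant norm on $\mathbb{R}^n$, and $x\in\mathbb{R}^n$. Then $u(x)$ is an optimal solution of $$\min\ \|u\|_s\quad\text{s.t. } u_1\ge\dots\ge u_K\ge0,\ u_{K+1}=\dots=u_n=0,\ u\ge_{wm}|x|.$$
   Context: A norm is sign- and permutation-invariant if it is unchanged under permuting entries and under changing signs of entries. $|x|$ is the componentwise absolute value; $v_{[i]}$ is the $i$-th largest entry of $v$; $a\ge_{wm}b$ means $\sum_{i=1}^j a_{[i]}\ge\sum_{i=1}^j b_{[i]}$ for all $j=1,\dots,n$. $s(x)_i=\frac{\sum_{j=i}^n|x|_{[j]}}{K-i+1}$ ($i=1,\dots,K$); $i_x$ is the smallest index in $\{1,\dots,K\}$ minimizing $s(x)_i$; $\delta(x)=s(x)_{i_x}$; $u(x)_i=|x|_{[i]}$ for $i<i_x$, $u(x)_i=\delta(x)$ for $i_x\le i\le K$, $u(x)_i=0$ for $i>K$. *)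

theory Defs
  imports Complex_Main "HOL-Library.Multiset"
begin

text \<open>Vectors in R^n are represented as real lists of length n; the paper's
  1-based entry v_i is the list entry v ! (i - 1).\<close>

definition absv :: "real list \<Rightarrow> real list" where
  "absv x = map abs x"

definition dec_entry :: "real list \<Rightarrow> nat \<Rightarrow> real" where
  "dec_entry v i = rev (sort v) ! (i - 1)"

definition wmaj :: "nat \<Rightarrow> real list \<Rightarrow> real list \<Rightarrow> bool" where
  "wmaj n a b \<longleftrightarrow> (\<forall>j\<in>{1..n}. (\<Sum>i=1..j. dec_entry a i) \<ge> (\<Sum>i=1..j. dec_entry b i))"

definition is_norm_on :: "nat \<Rightarrow> (real list \<Rightarrow> real) \<Rightarrow> bool" where
  "is_norm_on n N \<longleftrightarrow>
     (\<forall>x. length x = n \<longrightarrow> N x \<ge> 0) \<and>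
     (\<forall>x. length x = n \<longrightarrow> (N x = 0 \<longleftrightarrow> x = replicate n 0)) \<and>
     (\<forall>x c. length x = n \<longrightarrow> N (map (\<lambda>t. c * t) x) = \<bar>c\<bar> * N x) \<and>
     (\<forall>x y. length x = n \<longrightarrow> length y = n \<longrightarrow> N (map2 (+) x y) \<le> N x + N y)"

definition sign_invariant :: "nat \<Rightarrow> (real list \<Rightarrow> real) \<Rightarrow> bool" where
  "sign_invariant n N \<longleftrightarrow>
     (\<forall>x s. length x = n \<longrightarrow> length s = n \<longrightarrow> set s \<subseteq> {-1, 1} \<longrightarrow>
        N (map2 (*) s x) = N x)"

definition perm_invariant :: "nat \<Rightarrow> (real list \<Rightarrow> real) \<Rightarrow> bool" where
  "perm_invariant n N \<longleftrightarrow>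
     (\<forall>x y. length x = n \<longrightarrow> mset y = mset x \<longrightarrow> N y = N x)"

definition sval :: "nat \<Rightarrow> nat \<Rightarrow> real list \<Rightarrow> nat \<Rightarrow> real" where
  "sval n K x i = (\<Sum>j=i..n. dec_entry (absv x) j) / (real K - real i + 1)"

definition ix :: "nat \<Rightarrow> nat \<Rightarrow> real list \<Rightarrow> nat" where
  "ix n K x = (LEAST i. i \<in> {1..K} \<and> (\<forall>j\<in>{1..K}. sval n K x i \<le> sval n K x j))"

definition delta :: "nat \<Rightarrow> nat \<Rightarrow> real list \<Rightarrow> real" where
  "delta n K x = sval n K x (ix n K x)"

definition uvec :: "nat \<Rightarrow> nat \<Rightarrow> real list \<Rightarrow> real list" where
  "uvec n K x = map (\<lambda>i. if i < ix n K x then dec_entry (absv x) i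
                         else if i \<le> K then delta n K x else 0) [1..<n+1]"

definition feasible :: "nat \<Rightarrow> nat \<Rightarrow> real list \<Rightarrow> real list \<Rightarrow> bool" where
  "feasible n K x u \<longleftrightarrow> length u = n \<and>
     (\<forall>i. 1 \<le> i \<and> i < K \<longrightarrow> u ! (i - 1) \<ge> u ! i) \<and> u ! (K - 1) \<ge> 0 \<and>
     (\<forall>i. K < i \<and> i \<le> n \<longrightarrow> u ! (i - 1) = 0) \<and>
     wmaj n u (absv x)"

end

theory Submission
  imports Defs
begin

text \<open>
  Sort |x| decreasingly into a and put q = i_x - 1. Then u(x) keeps a_1, ..., a_q and spreads the
  remaining mass evenly, at level \<delta>(x), over the positions q + 1, ..., K; the minimality of i_x
  says precisely that this vector is decreasing and that its prefix sums dominate those of a.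
  Conversely, a feasible v is decreasing and vanishes beyond K, and on the positions q + 1, ..., K the
  running mean of a decreasing vector dominates its overall mean, so the prefix sums of v dominate
  those of u(x).

  It remains to see that for a decreasing nonnegative u, prefix-sum domination by v implies
  N u \<le> N v for every sign- and permutation-invariant norm. While some v_k < u_k, a Robin Hood
  transfer from an earlier entry v_j > u_j to v_k keeps the domination, moves v towards u and, being
  a convex combination of v and v with two entries swapped, does not increase the norm. Once
  u \<le> v entrywise, N is monotone in the absolute values of the entries, since shrinking one
  entry is a convex combination of v and v with that entry negated.
\<close>

section \<open>Sign- and permutation-invariant norms\<close>

lemma norm_convex_comb:
  assumes N: "is_norm_on n N" and x: "length x = n" and y: "length y = n"
    and t: "0 \<le> t" "t \<le> 1"
  shows "N (map2 (\<lambda>a b. t * a + (1 - t) * b) x y) \<le> t * N x + (1 - t) * N y"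
proof -
  have homog: "\<And>z c. length z = n \<Longrightarrow> N (map (\<lambda>s. c * s) z) = \<bar>c\<bar> * N z"
    and triangle: "\<And>z w. length z = n \<Longrightarrow> length w = n \<Longrightarrow> N (map2 (+) z w) \<le> N z + N w"
    using N unfolding is_norm_on_def by blast+
  have "map2 (\<lambda>a b. t * a + (1 - t) * b) x y
        = map2 (+) (map (\<lambda>s. t * s) x) (map (\<lambda>s. (1 - t) * s) y)"
    by (rule nth_equalityI) (simp_all add: x y)
  also have "N \<dots> \<le> N (map (\<lambda>s. t * s) x) + N (map (\<lambda>s. (1 - t) * s) y)"
    by (rule triangle) (simp_all add: x y)
  also have "\<dots> = t * N x + (1 - t) * N y"
    using homog[OF x, of t] homog[OF y, of "1 - t"] t by simp
  finally show ?thesis .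
qed

lemma perm_invariant_swap:
  assumes "perm_invariant n N" "length x = n" "j < n" "k < n"
  shows "N (x[j := x ! k, k := x ! j]) = N x"
proof -
  have "mset (x[j := x ! k, k := x ! j]) = mset x"
    using assms(2-4) by (simp add: mset_swap)
  then show ?thesis
    using assms(1,2) unfolding perm_invariant_def by blast
qed

lemma sign_invariant_negate:
  assumes "sign_invariant n N" "length x = n" "i < n"
  shows "N (x[i := - (x ! i)]) = N x"
proof -
  let ?s = "(replicate n (1::real))[i := -1]"
  have "map2 (*) ?s x = x[i := - (x ! i)]"
    by (rule nth_equalityI) (auto simp: assms nth_list_update)
  moreover have "set ?s \<subseteq> {-1, 1}"
    using set_update_subset_insert[of "replicate n (1::real)" i "-1"] by auto
  ultimately show ?thesis
    using assms unfolding sign_invariant_def by (metis length_list_update length_replicate)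
qed

lemma norm_update_le:
  assumes N: "is_norm_on n N" and sgn: "sign_invariant n N" and x: "length x = n" and i: "i < n"
    and y: "\<bar>y\<bar> \<le> \<bar>x ! i\<bar>"
  shows "N (x[i := y]) \<le> N x"
proof (cases "x ! i = 0")
  case True
  with y have "y = x ! i" by simp
  then have "x[i := y] = x" by simp
  then show ?thesis by simp
next
  case False
  \<comment> \<open>x[i := y] is a convex combination of x and its reflection in the i-th coordinate.\<close>
  define t where "t = (1 + y / x ! i) / 2"
  have r: "\<bar>y / x ! i\<bar> \<le> 1"
    using y False by (simp add: abs_divide)
  have t: "0 \<le> t" "t \<le> 1"
    unfolding t_def using abs_le_D1[OF r] abs_le_D2[OF r] by auto
  have "x[i := y] = map2 (\<lambda>a b. t * a + (1 - t) * b) x (x[i := - (x ! i)])"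
  proof (rule nth_equalityI)
    fix l assume "l < length (x[i := y])"
    moreover have "y = t * x ! i - (1 - t) * x ! i"
      using False by (simp add: t_def field_simps)
    ultimately show "x[i := y] ! l = map2 (\<lambda>a b. t * a + (1 - t) * b) x (x[i := - (x ! i)]) ! l"
      by (cases "l = i") (simp_all add: x algebra_simps)
  qed (simp add: x)
  also have "N \<dots> \<le> t * N x + (1 - t) * N (x[i := - (x ! i)])"
    by (rule norm_convex_comb[OF N x _ t]) (simp add: x)
  also have "\<dots> = N x"
    using sign_invariant_negate[OF sgn x i] by (simp add: algebra_simps)
  finally show ?thesis .
qed

lemma norm_mono_abs:
  assumes N: "is_norm_on n N" and sgn: "sign_invariant n N"
    and u: "length u = n" and v: "length v = n" and le: "\<And>i. i < n \<Longrightarrow> \<bar>u ! i\<bar> \<le> \<bar>v ! i\<bar>"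
  shows "N u \<le> N v"
proof -
  have "N (take m u @ drop m v) \<le> N v" if "m \<le> n" for m
    using that
  proof (induction m)
    case 0
    then show ?case by simp
  next
    case (Suc m)
    let ?w = "take m u @ drop m v"
    have m: "m < n" using Suc.prems by simp
    have w: "length ?w = n" "?w ! m = v ! m"
      using m u v by (simp_all add: nth_append)
    have "take (Suc m) u @ drop (Suc m) v = ?w[m := u ! m]"
    proof -
      have "take (Suc m) u = take m u @ [u ! m]"
        using m u by (simp add: take_Suc_conv_app_nth)
      moreover have "drop m v = v ! m # drop (Suc m) v"
        using m v by (simp add: Cons_nth_drop_Suc)
      moreover have "length (take m u) = m"
        using m u by simp
      ultimately show ?thesis by (simp add: list_update_append)
    qed
    also have "N \<dots> \<le> N ?w"
      using norm_update_le[OF N sgn w(1) m] le[OF m] w(2) by simp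
    finally show ?case using Suc by simp
  qed
  from this[of n] show ?thesis using u v by simp
qed

lemma norm_transfer_le:
  assumes N: "is_norm_on n N" and perm: "perm_invariant n N" and v: "length v = n"
    and jk: "j < n" "k < n" "j \<noteq> k" and e: "0 \<le> e" "e \<le> v ! j - v ! k"
  shows "N (v[j := v ! j - e, k := v ! k + e]) \<le> N v"
proof (cases "v ! j = v ! k")
  case True
  with e have "e = 0" by simp
  then have "v[j := v ! j - e, k := v ! k + e] = v" by simp
  then show ?thesis by simp
next
  case False
  \<comment> \<open>The transfer is a convex combination of v and v with entries j and k swapped.\<close>
  define t where "t = 1 - e / (v ! j - v ! k)"
  have d: "0 < v ! j - v ! k" using False e by simp
  then have t: "0 \<le> t" "t \<le> 1" using e by (simp_all add: t_def)
  let ?s = "v[j := v ! k, k := v ! j]"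
  have e_eq: "e = (1 - t) * (v ! j - v ! k)"
    using d by (simp add: t_def)
  have "v[j := v ! j - e, k := v ! k + e] = map2 (\<lambda>a b. t * a + (1 - t) * b) v ?s"
  proof (rule nth_equalityI)
    fix i assume "i < length (v[j := v ! j - e, k := v ! k + e])"
    then show "v[j := v ! j - e, k := v ! k + e] ! i = map2 (\<lambda>a b. t * a + (1 - t) * b) v ?s ! i"
      using jk v by (cases "i = j"; cases "i = k") (simp_all add: e_eq algebra_simps)
  qed (simp add: v)
  also have "N \<dots> \<le> t * N v + (1 - t) * N ?s"
    by (rule norm_convex_comb[OF N v _ t]) (simp add: v)
  also have "\<dots> = N v"
    using perm_invariant_swap[OF perm v jk(1,2)] by (simp add: algebra_simps)
  finally show ?thesis .
qed

lemma sum_lessThan_split: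
  fixes f :: "nat \<Rightarrow> 'a :: comm_monoid_add"
  assumes "a \<le> b"
  shows "(\<Sum>i<b. f i) = (\<Sum>i<a. f i) + (\<Sum>i\<in>{a..<b}. f i)"
  using sum.atLeastLessThan_concat[of 0 a b f] assms by (simp add: lessThan_atLeast0)

lemma sum_prefix_transfer:
  fixes v :: "real list"
  assumes "length v = n" "j < n" "k < n" "j \<noteq> k" "m \<le> n"
  shows "(\<Sum>i<m. v[j := v ! j - e, k := v ! k + e] ! i)
         = (\<Sum>i<m. v ! i) + (if k < m then e else 0) - (if j < m then e else 0)"
proof -
  have "(\<Sum>i<m. v[j := v ! j - e, k := v ! k + e] ! i)
        = (\<Sum>i<m. v ! i + (if i = k then e else 0) - (if i = j then e else 0))"
    using assms by (intro sum.cong) (auto simp: nth_list_update)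
  also have "\<dots> = (\<Sum>i<m. v ! i) + (if k < m then e else 0) - (if j < m then e else 0)"
    by (simp add: sum.distrib sum_subtractf)
  finally show ?thesis .
qed

lemma exists_transfer_pair:
  fixes u v :: "real list"
  assumes dom: "\<And>m. m \<le> n \<Longrightarrow> (\<Sum>i<m. u ! i) \<le> (\<Sum>i<m. v ! i)"
    and k0: "k0 < n" "v ! k0 < u ! k0"
  obtains j k where "j < k" "k < n" "u ! j < v ! j" "v ! k < u ! k"
    and "\<And>i. j < i \<Longrightarrow> i < k \<Longrightarrow> u ! i = v ! i"
proof -
  define k where "k = (LEAST k. k < n \<and> v ! k < u ! k)"
  have k: "k < n" "v ! k < u ! k"
    using LeastI[of "\<lambda>k. k < n \<and> v ! k < u ! k", OF conjI[OF k0]] unfolding k_def by auto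
  have below_k: "u ! i \<le> v ! i" if "i < k" for i
    using not_less_Least[of i "\<lambda>k. k < n \<and> v ! k < u ! k"] that k unfolding k_def[symmetric]
    by auto
  define J where "J = {j. j < k \<and> u ! j < v ! j}"
  have "J \<noteq> {}"
  proof
    assume "J = {}"
    then have "v ! i \<le> u ! i" if "i < k" for i
      using that unfolding J_def by (metis (mono_tags, lifting) empty_iff mem_Collect_eq not_less)
    then have "(\<Sum>i<k. v ! i) \<le> (\<Sum>i<k. u ! i)"
      by (intro sum_mono) simp
    then show False
      using dom[of "Suc k"] k by simp
  qed
  moreover have "finite J"
    unfolding J_def by simp
  ultimately have j: "Max J \<in> J" and above_j: "\<And>i. i \<in> J \<Longrightarrow> i \<le> Max J"
    by simp_all
  show ?thesis
  proof
    show "Max J < k" "u ! Max J < v ! Max J"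
      using j unfolding J_def by simp_all
    show "u ! i = v ! i" if "Max J < i" "i < k" for i
    proof -
      have "i \<notin> J"
        using above_j[of i] that by auto
      then show ?thesis
        using below_k[of i] that unfolding J_def by auto
    qed
  qed (use k in simp_all)
qed

lemma prefix_sums_transfer_le:
  fixes u v :: "real list"
  assumes v: "length v = n"
    and dom: "\<And>m. m \<le> n \<Longrightarrow> (\<Sum>i<m. u ! i) \<le> (\<Sum>i<m. v ! i)"
    and jk: "j < k" "k < n" and mid: "\<And>i. j < i \<Longrightarrow> i < k \<Longrightarrow> u ! i = v ! i"
    and e: "0 \<le> e" "e \<le> v ! j - u ! j"
    and m: "m \<le> n"
  shows "(\<Sum>i<m. u ! i) \<le> (\<Sum>i<m. v[j := v ! j - e, k := v ! k + e] ! i)"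
proof (cases "j < m \<and> m \<le> k")
  case False
  then show ?thesis
    using sum_prefix_transfer[OF v _ jk(2) _ m, of j e] dom[OF m] jk e by auto
next
  case True
  \<comment> \<open>Between j and k the prefix surplus of v over u is at least its value v!j - u!j at j.\<close>
  have "(\<Sum>i\<in>{Suc j..<m}. v ! i - u ! i) = 0"
    using True mid by (intro sum.neutral) auto
  then have "(\<Sum>i<m. v ! i - u ! i) = (\<Sum>i<j. v ! i - u ! i) + (v ! j - u ! j)"
    using sum_lessThan_split[of "Suc j" m "\<lambda>i. v ! i - u ! i"] True by simp
  moreover have "0 \<le> (\<Sum>i<j. v ! i - u ! i)"
    using dom[of j] jk m by (simp add: sum_subtractf)
  ultimately have "e \<le> (\<Sum>i<m. v ! i - u ! i)"
    using e by linarith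
  then show ?thesis
    using sum_prefix_transfer[OF v _ jk(2) _ m, of j e] True jk by (simp add: sum_subtractf)
qed

lemma norm_le_if_prefix_sums_le:
  assumes N: "is_norm_on n N" and sgn: "sign_invariant n N" and perm: "perm_invariant n N"
    and u: "length u = n" "sorted (rev u)" "\<And>i. i < n \<Longrightarrow> 0 \<le> u ! i"
    and v: "length v = n" and dom: "\<And>m. m \<le> n \<Longrightarrow> (\<Sum>i<m. u ! i) \<le> (\<Sum>i<m. v ! i)"
  shows "N u \<le> N v"
  using v dom
proof (induction "card {i. i < n \<and> u ! i \<noteq> v ! i}" arbitrary: v rule: less_induct)
  case less
  show ?case
  proof (cases "\<exists>k<n. v ! k < u ! k")
    case False
    show ?thesis
      by (rule norm_mono_abs[OF N sgn u(1) less.prems(1)]) (use False u(3) in force)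
  next
    case True
    then obtain k0 where "k0 < n" "v ! k0 < u ! k0" by blast
    then obtain j k where jk: "j < k" "k < n" and uv: "u ! j < v ! j" "v ! k < u ! k"
      and mid: "\<And>i. j < i \<Longrightarrow> i < k \<Longrightarrow> u ! i = v ! i"
      using exists_transfer_pair[OF less.prems(2)] by blast
    define e where "e = min (v ! j - u ! j) (u ! k - v ! k)"
    define w where "w = v[j := v ! j - e, k := v ! k + e]"
    have "u ! k \<le> u ! j"
      using sorted_rev_nth_mono[OF u(2)] jk u(1) by simp
    then have e: "0 \<le> e" "e \<le> v ! j - u ! j" "e \<le> v ! j - v ! k"
      using uv by (auto simp: e_def)
    have w: "length w = n"
      using less.prems(1) by (simp add: w_def)
    have "N w \<le> N v"
      unfolding w_def using jk e by (intro norm_transfer_le[OF N perm less.prems(1)]) auto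
    moreover have "N u \<le> N w"
    proof (rule less.hyps[OF _ w])
      let ?D = "\<lambda>v. {i. i < n \<and> u ! i \<noteq> v ! i}"
      have "?D w \<subseteq> ?D v"
      proof
        fix i assume "i \<in> ?D w"
        then show "i \<in> ?D v"
          using uv jk by (cases "i = j \<or> i = k") (auto simp: w_def)
      qed
      moreover have "u ! j = w ! j \<or> u ! k = w ! k"
        using jk less.prems(1) by (auto simp: w_def e_def min_def)
      ultimately have "?D w \<subset> ?D v"
        using jk uv by auto
      then show "card (?D w) < card (?D v)"
        by (intro psubset_card_mono) simp_all
      show "\<And>m. m \<le> n \<Longrightarrow> (\<Sum>i<m. u ! i) \<le> (\<Sum>i<m. w ! i)"
        unfolding w_def using less.prems jk mid e by (intro prefix_sums_transfer_le) auto
    qed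
    ultimately show ?thesis by simp
  qed
qed

section \<open>Weak majorization of decreasing vectors\<close>

lemma rev_sort_eq_self: "sorted (rev v) \<Longrightarrow> rev (sort v) = v"
  using properties_for_sort[of "rev v" v] by simp

lemma sum_dec_entry_prefix: "(\<Sum>i=1..m. dec_entry v i) = (\<Sum>i<m. rev (sort v) ! i)"
  unfolding dec_entry_def using sum.atLeast1_atMost_eq[of "\<lambda>i. rev (sort v) ! (i - 1)" m] by simp

lemma sum_dec_entry_tail: "(\<Sum>j=Suc i..n. dec_entry v j) = (\<Sum>j=i..<n. rev (sort v) ! j)"
proof (cases n)
  case 0
  then show ?thesis by simp
next
  case (Suc n')
  then show ?thesis
    unfolding dec_entry_def using sum.shift_bounds_cl_Suc_ivl[of "\<lambda>j. rev (sort v) ! (j - 1)" i n']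
    by (simp add: atLeastLessThanSuc_atLeastAtMost)
qed

lemma wmaj_iff_prefix_sums:
  assumes "sorted (rev v)"
  shows "wmaj n v w \<longleftrightarrow> (\<forall>m\<le>n. (\<Sum>i<m. rev (sort w) ! i) \<le> (\<Sum>i<m. v ! i))"
  unfolding wmaj_def sum_dec_entry_prefix rev_sort_eq_self[OF assms]
proof (intro iffI allI impI ballI)
  fix m assume "\<forall>j\<in>{1..n}. (\<Sum>i<j. rev (sort w) ! i) \<le> (\<Sum>i<j. v ! i)" "m \<le> n"
  then show "(\<Sum>i<m. rev (sort w) ! i) \<le> (\<Sum>i<m. v ! i)"
    by (cases "m = 0") auto
qed simp

lemma feasible_iff:
  assumes K: "0 < K" "K \<le> n"
  shows "feasible n K x v \<longleftrightarrow>
    length v = n \<and> sorted (rev v) \<and> (\<forall>i<n. 0 \<le> v ! i) \<and>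
    (\<forall>i. K \<le> i \<longrightarrow> i < n \<longrightarrow> v ! i = 0) \<and> wmaj n v (absv x)"
proof
  assume feas: "feasible n K x v"
  then have v: "length v = n" and step: "\<And>i. 1 \<le> i \<Longrightarrow> i < K \<Longrightarrow> v ! i \<le> v ! (i - 1)"
    and last: "0 \<le> v ! (K - 1)" and wm: "wmaj n v (absv x)"
    by (simp_all add: feasible_def)
  have "\<forall>i. K < i \<and> i \<le> n \<longrightarrow> v ! (i - 1) = 0"
    using feas by (simp add: feasible_def)
  then have zero: "v ! i = 0" if "K \<le> i" "i < n" for i
    using that by (metis Suc_le_eq diff_Suc_1 le_imp_less_Suc)
  have sorted: "sorted (rev v)"
    unfolding sorted_rev_iff_nth_Suc
  proof (intro allI impI)
    fix i assume "Suc i < length v"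
    then show "v ! Suc i \<le> v ! i"
      using step[of "Suc i"] last zero[of i] zero[of "Suc i"] v
      by (cases "Suc i < K"; cases "Suc i = K") auto
  qed
  have "0 \<le> v ! i" if "i < n" for i
  proof (cases "i < K")
    case True
    then have "i \<le> K - 1" "K - 1 < length v"
      using v K by auto
    then show ?thesis
      using sorted_rev_nth_mono[OF sorted] last by fastforce
  next
    case False
    then show ?thesis using zero that by simp
  qed
  then show "length v = n \<and> sorted (rev v) \<and> (\<forall>i<n. 0 \<le> v ! i) \<and>
      (\<forall>i. K \<le> i \<longrightarrow> i < n \<longrightarrow> v ! i = 0) \<and> wmaj n v (absv x)"
    using v sorted zero wm by blast
next
  assume "length v = n \<and> sorted (rev v) \<and> (\<forall>i<n. 0 \<le> v ! i) \<and>
    (\<forall>i. K \<le> i \<longrightarrow> i < n \<longrightarrow> v ! i = 0) \<and> wmaj n v (absv x)"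
  then have v: "length v = n" "sorted (rev v)" "\<And>i. i < n \<Longrightarrow> 0 \<le> v ! i"
    and zero: "\<And>i. K \<le> i \<Longrightarrow> i < n \<Longrightarrow> v ! i = 0" and "wmaj n v (absv x)"
    by simp_all
  moreover have "v ! i \<le> v ! (i - 1)" if "1 \<le> i" "i < K" for i
    using sorted_rev_nth_mono[OF v(2), of "i - 1" i] that K v(1) by simp
  moreover have "v ! (i - 1) = 0" if "K < i \<and> i \<le> n" for i
    using that by (intro zero) auto
  moreover have "0 \<le> v ! (K - 1)"
    using v(3) K by simp
  ultimately show "feasible n K x v"
    unfolding feasible_def by blast
qed

section \<open>Spreading a tail evenly up to position K\<close>

lemma mean_initial_segment_ge:
  fixes v :: "real list"
  assumes v: "sorted (rev v)" "K \<le> length v" and m: "q \<le> m" "m \<le> K"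
  shows "real (m - q) * (\<Sum>i=q..<K. v ! i) \<le> real (K - q) * (\<Sum>i=q..<m. v ! i)"
proof (cases "m = q")
  case True
  then show ?thesis by simp
next
  case False
  define c where "c = v ! (m - 1)"
  define X where "X = (\<Sum>i=q..<m. v ! i)"
  define Y where "Y = (\<Sum>i=m..<K. v ! i)"
  have "real (card {q..<m}) * c \<le> X"
    unfolding X_def c_def using False m v by (intro sum_bounded_below) (auto intro: sorted_rev_nth_mono)
  then have X: "real (m - q) * c \<le> X" by simp
  have "Y \<le> real (card {m..<K}) * c"
    unfolding Y_def c_def using False m v by (intro sum_bounded_above) (auto intro: sorted_rev_nth_mono)
  then have Y: "Y \<le> real (K - m) * c" by simp
  have "(\<Sum>i=q..<K. v ! i) = X + Y"
    unfolding X_def Y_def using m by (simp add: sum.atLeastLessThan_concat)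
  moreover have "real (m - q) * Y \<le> real (K - m) * X"
    using mult_left_mono[OF Y, of "real (m - q)"] mult_left_mono[OF X, of "real (K - m)"]
    by (simp add: algebra_simps)
  moreover have "real (K - q) = real (m - q) + real (K - m)"
    using m by simp
  ultimately show ?thesis
    unfolding X_def by (simp add: algebra_simps)
qed

definition level_cut :: "real list \<Rightarrow> nat \<Rightarrow> nat \<Rightarrow> real \<Rightarrow> real list" where
  "level_cut a K q d = map (\<lambda>i. if i < q then a ! i else if i < K then d else 0) [0..<length a]"

locale tail_average =
  fixes a :: "real list" and K q :: nat and d :: real
  assumes sorted_rev: "sorted (rev a)"
    and nonneg: "\<And>i. i < length a \<Longrightarrow> 0 \<le> a ! i"
    and q_less_K: "q < K" and K_le: "K \<le> length a"
    and level_eq: "real (K - q) * d = (\<Sum>i=q..<length a. a ! i)"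
    and level_le: "\<And>j. q \<le> j \<Longrightarrow> j < K \<Longrightarrow> real (K - j) * d \<le> (\<Sum>i=j..<length a. a ! i)"
    and level_below: "0 < q \<Longrightarrow> d < a ! (q - 1)"
begin

abbreviation cut :: "real list" where
  "cut \<equiv> level_cut a K q d"

lemma length_cut [simp]: "length cut = length a"
  by (simp add: level_cut_def)

lemma nth_cut: "i < length a \<Longrightarrow> cut ! i = (if i < q then a ! i else if i < K then d else 0)"
  by (simp add: level_cut_def)

lemma tail_nonneg: "0 \<le> (\<Sum>i=j..<length a. a ! i)"
  using nonneg by (intro sum_nonneg) simp

lemma level_nonneg: "0 \<le> d"
proof -
  have "real (K - q) * 0 \<le> real (K - q) * d"
    using level_eq tail_nonneg[of q] by simp
  then show ?thesis
    using q_less_K by (simp only: mult_le_cancel_left_pos of_nat_0_less_iff zero_less_diff)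
qed

lemma cut_nonneg: "i < length a \<Longrightarrow> 0 \<le> cut ! i"
  using nonneg level_nonneg by (simp add: nth_cut)

lemma sorted_rev_cut: "sorted (rev cut)"
  unfolding sorted_rev_iff_nth_Suc
proof (intro allI impI)
  fix i assume i: "Suc i < length cut"
  have "d \<le> a ! i" if "Suc i = q"
    using level_below that by (metis diff_Suc_1 less_imp_le zero_less_Suc)
  moreover have "a ! Suc i \<le> a ! i"
    using sorted_rev_nth_mono[OF sorted_rev, of i "Suc i"] i by simp
  ultimately show "cut ! Suc i \<le> cut ! i"
    using i level_nonneg by (auto simp: nth_cut)
qed

lemma sum_cut:
  assumes "m \<le> length a"
  shows "(\<Sum>i<m. cut ! i) = (\<Sum>i<min m q. a ! i) + real (min m K - q) * d"
proof -
  have "(\<Sum>i<m. cut ! i)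
        = (\<Sum>i<min m q. cut ! i) + (\<Sum>i=min m q..<min m K. cut ! i) + (\<Sum>i=min m K..<m. cut ! i)"
    using sum_lessThan_split[of "min m K" m "\<lambda>i. cut ! i"]
      sum_lessThan_split[of "min m q" "min m K" "\<lambda>i. cut ! i"] q_less_K
    by simp
  also have "(\<Sum>i<min m q. cut ! i) = (\<Sum>i<min m q. a ! i)"
    using assms by (intro sum.cong) (auto simp: nth_cut)
  also have "(\<Sum>i=min m q..<min m K. cut ! i) = (\<Sum>i=min m q..<min m K. d)"
    using assms q_less_K by (intro sum.cong) (auto simp: nth_cut)
  also have "(\<Sum>i=min m K..<m. cut ! i) = 0"
    using assms q_less_K by (intro sum.neutral) (auto simp: nth_cut)
  finally show ?thesis
    using q_less_K by (simp add: min_def)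
qed

lemma prefix_sums_le_cut:
  assumes m: "m \<le> length a"
  shows "(\<Sum>i<m. a ! i) \<le> (\<Sum>i<m. cut ! i)"
proof -
  have total: "(\<Sum>i<j. a ! i) + (\<Sum>i=j..<length a. a ! i) = (\<Sum>i<length a. a ! i)"
    if "j \<le> length a" for j
    using sum_lessThan_split[OF that, of "\<lambda>i. a ! i"] by simp
  consider "m \<le> q" | "q < m" "m \<le> K" | "K < m"
    by linarith
  then show ?thesis
  proof cases
    case 1
    then show ?thesis using m by (simp add: sum_cut)
  next
    case 2
    \<comment> \<open>The mass of a on [q, m) is at most (m - q) d because the tail from m carries at least (K - m) d.\<close>
    have "real (K - m) * d \<le> (\<Sum>i=m..<length a. a ! i)"
      using level_le[of m] 2 tail_nonneg[of m] by (cases "m = K") auto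
    moreover have "real (K - q) = real (m - q) + real (K - m)"
      using 2 by simp
    ultimately show ?thesis
      using total[of q] total[of m] level_eq 2 m q_less_K
      by (simp add: sum_cut min_absorb1 min_absorb2 algebra_simps)
  next
    case 3
    have "(\<Sum>i<m. a ! i) \<le> (\<Sum>i<length a. a ! i)"
      using total[OF m] tail_nonneg[of m] by simp
    then show ?thesis
      using total[of q] level_eq 3 m q_less_K K_le by (simp add: sum_cut min_absorb1 min_absorb2)
  qed
qed

lemma prefix_sums_cut_le:
  fixes v :: "real list"
  assumes v: "length v = length a" "sorted (rev v)" "\<And>i. K \<le> i \<Longrightarrow> i < length a \<Longrightarrow> v ! i = 0"
    and dom: "\<And>m. m \<le> length a \<Longrightarrow> (\<Sum>i<m. a ! i) \<le> (\<Sum>i<m. v ! i)"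
    and m: "m \<le> length a"
  shows "(\<Sum>i<m. cut ! i) \<le> (\<Sum>i<m. v ! i)"
proof -
  have v_K: "(\<Sum>i<j. v ! i) = (\<Sum>i<K. v ! i)" if "K \<le> j" "j \<le> length a" for j
    using sum_lessThan_split[OF that(1), of "\<lambda>i. v ! i"] that v(3) by simp
  have total: "(\<Sum>i<length a. a ! i) = (\<Sum>i<q. a ! i) + real (K - q) * d"
    using sum_lessThan_split[of q "length a" "\<lambda>i. a ! i"] level_eq q_less_K K_le by simp
  consider "m \<le> q" | "q < m" "m < K" | "K \<le> m"
    by linarith
  then show ?thesis
  proof cases
    case 1
    then show ?thesis using dom m by (simp add: sum_cut)
  next
    case 2
    \<comment> \<open>v has at least the total mass of a in [0, K) and its mean over [q, m) dominates its mean over [q, K).\<close>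
    define L where "L = real (K - q)"
    define \<mu> where "\<mu> = real (m - q)"
    define A where "A = (\<Sum>i<q. a ! i)"
    define B where "B = (\<Sum>i<q. v ! i)"
    define X where "X = (\<Sum>i=q..<m. v ! i)"
    define T where "T = (\<Sum>i=q..<K. v ! i)"
    have L: "0 < L" "\<mu> \<le> L" "0 \<le> \<mu>"
      using 2 q_less_K by (simp_all add: L_def \<mu>_def)
    have AB: "A \<le> B"
      using dom[of q] q_less_K K_le by (simp add: A_def B_def)
    have mass: "A + L * d \<le> B + T"
      using dom[of "length a"] total v_K[of "length a"] sum_lessThan_split[of q K "\<lambda>i. v ! i"] q_less_K K_le
      by (simp add: A_def B_def T_def L_def)
    have mean: "\<mu> * T \<le> L * X"
      unfolding \<mu>_def T_def L_def X_def using 2 v K_le by (intro mean_initial_segment_ge) auto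
    have "L * (A + \<mu> * d) = (L - \<mu>) * A + \<mu> * (A + L * d)"
      by (simp add: algebra_simps)
    also have "\<dots> \<le> (L - \<mu>) * B + \<mu> * (B + T)"
      using L by (intro add_mono mult_left_mono AB mass) auto
    also have "\<dots> \<le> L * (B + X)"
      using mean by (simp add: algebra_simps)
    finally have "A + \<mu> * d \<le> B + X"
      using L by simp
    then show ?thesis
      using sum_lessThan_split[of q m "\<lambda>i. v ! i"] 2 m
      by (simp add: sum_cut A_def B_def X_def \<mu>_def)
  next
    case 3
    have "(\<Sum>i<length a. a ! i) \<le> (\<Sum>i<m. v ! i)"
      using dom[of "length a"] v_K[of "length a"] v_K[OF 3 m] K_le by simp
    then show ?thesis
      using total 3 m q_less_K by (simp add: sum_cut min_absorb1 min_absorb2)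
  qed
qed

lemma feasible_cut:
  assumes x: "a = rev (sort (absv x))"
  shows "feasible (length a) K x cut"
proof -
  have "wmaj (length a) cut (absv x)"
    unfolding wmaj_iff_prefix_sums[OF sorted_rev_cut] x[symmetric] using prefix_sums_le_cut by simp
  moreover have "cut ! i = 0" if "K \<le> i" "i < length a" for i
    using that q_less_K by (simp add: nth_cut)
  ultimately show ?thesis
    using q_less_K K_le sorted_rev_cut cut_nonneg by (simp add: feasible_iff)
qed

lemma norm_cut_le_feasible:
  assumes x: "a = rev (sort (absv x))"
    and N: "is_norm_on (length a) N" "sign_invariant (length a) N" "perm_invariant (length a) N"
    and feasible: "feasible (length a) K x v"
  shows "N cut \<le> N v"
proof -
  have v: "length v = length a" "sorted (rev v)" "\<And>i. K \<le> i \<Longrightarrow> i < length a \<Longrightarrow> v ! i = 0"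
    and "wmaj (length a) v (absv x)"
    using feasible q_less_K K_le by (simp_all add: feasible_iff)
  then have "\<And>m. m \<le> length a \<Longrightarrow> (\<Sum>i<m. a ! i) \<le> (\<Sum>i<m. v ! i)"
    by (simp add: wmaj_iff_prefix_sums x)
  then have "\<And>m. m \<le> length a \<Longrightarrow> (\<Sum>i<m. cut ! i) \<le> (\<Sum>i<m. v ! i)"
    using v by (intro prefix_sums_cut_le) auto
  then show ?thesis
    using v by (intro norm_le_if_prefix_sums_le[OF N]) (simp_all add: sorted_rev_cut cut_nonneg)
qed

end

section \<open>The vector u(x)\<close>

lemma ix_minimal:
  assumes "0 < K"
  shows "ix n K x \<in> {1..K}" and "\<And>j. j \<in> {1..K} \<Longrightarrow> sval n K x (ix n K x) \<le> sval n K x j"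
    and "\<And>i. 1 \<le> i \<Longrightarrow> i < ix n K x \<Longrightarrow> sval n K x (ix n K x) < sval n K x i"
proof -
  let ?P = "\<lambda>i. i \<in> {1..K} \<and> (\<forall>j\<in>{1..K}. sval n K x i \<le> sval n K x j)"
  obtain i0 where "is_arg_min (sval n K x) (\<lambda>i. i \<in> {1..K}) i0"
    using ex_is_arg_min_if_finite[of "{1..K}" "sval n K x"] assms by auto
  then have "?P i0"
    by (auto simp: is_arg_min_def not_less)
  then have P: "?P (ix n K x)"
    unfolding ix_def by (rule LeastI)
  then show "ix n K x \<in> {1..K}" "\<And>j. j \<in> {1..K} \<Longrightarrow> sval n K x (ix n K x) \<le> sval n K x j"
    by simp_all
  fix i assume i: "1 \<le> i" "i < ix n K x"
  then have "\<not> ?P i"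
    using not_less_Least[of i ?P] unfolding ix_def by blast
  then show "sval n K x (ix n K x) < sval n K x i"
    using P i by force
qed

lemma tail_average_ix:
  assumes K: "0 < K" "K \<le> length x"
  shows "tail_average (rev (sort (absv x))) K (ix (length x) K x - 1) (delta (length x) K x)"
proof -
  define n where "n = length x"
  define a where "a = rev (sort (absv x))"
  define q where "q = ix n K x - 1"
  define d where "d = delta n K x"
  have a: "length a = n"
    by (simp add: a_def n_def absv_def)
  have q: "ix n K x = Suc q" "q < K"
    using ix_minimal(1)[OF K(1), of n x] by (auto simp: q_def)
  have sval_Suc: "sval n K x (Suc j) = (\<Sum>i=j..<n. a ! i) / real (K - j)" if "j < K" for j
    using that by (simp add: sval_def sum_dec_entry_tail a_def of_nat_diff)
  have "d = (\<Sum>i=q..<n. a ! i) / real (K - q)"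
    using q by (simp add: d_def delta_def sval_Suc)
  then have level: "real (K - q) * d = (\<Sum>i=q..<n. a ! i)"
    using q by simp
  have "tail_average a K q d"
  proof
    show "sorted (rev a)" "q < K" "K \<le> length a"
      using q K a by (simp_all add: a_def n_def)
    show "0 \<le> a ! i" if "i < length a" for i
      using nth_mem[OF that] by (auto simp: a_def absv_def)
    show "real (K - q) * d = (\<Sum>i=q..<length a. a ! i)"
      using level a by simp
    show "real (K - j) * d \<le> (\<Sum>i=j..<length a. a ! i)" if "q \<le> j" "j < K" for j
    proof -
      have "d \<le> sval n K x (Suc j)"
        using ix_minimal(2)[OF K(1), of "Suc j" n x] that q by (simp add: d_def delta_def)
      then show ?thesis
        using sval_Suc[OF that(2)] that(2) a by (simp add: le_divide_eq mult.commute)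
    qed
    assume "0 < q"
    \<comment> \<open>Minimality of ix: the mean over positions from q - 1 exceeds the mean d over positions from q.\<close>
    have "(\<Sum>i=q-1..<n. a ! i) = a ! (q - 1) + (\<Sum>i=q..<n. a ! i)"
      using \<open>0 < q\<close> q K a n_def by (subst sum.atLeast_Suc_lessThan) auto
    moreover have "real (K - (q - 1)) = real (K - q) + 1"
      using \<open>0 < q\<close> q by simp
    ultimately have "sval n K x q * (real (K - q) + 1) = a ! (q - 1) + real (K - q) * d"
      using sval_Suc[of "q - 1"] \<open>0 < q\<close> q level by (simp add: field_simps)
    moreover have "d * (real (K - q) + 1) < sval n K x q * (real (K - q) + 1)"
      using ix_minimal(3)[OF K(1), of q n x] \<open>0 < q\<close> q
      by (intro mult_strict_right_mono) (simp_all add: d_def delta_def)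
    ultimately show "d < a ! (q - 1)"
      by (simp add: algebra_simps)
  qed
  then show ?thesis
    by (simp add: a_def q_def d_def n_def)
qed

lemma uvec_eq_cut:
  assumes K: "0 < K" "K \<le> length x"
  shows "uvec (length x) K x
         = level_cut (rev (sort (absv x))) K (ix (length x) K x - 1) (delta (length x) K x)"
  using ix_minimal(1)[OF K(1), of "length x" x]
  by (intro nth_equalityI)
    (auto simp: uvec_def level_cut_def absv_def dec_entry_def simp del: upt_Suc)

theorem mainTheorem8:
  fixes n K :: nat and N :: "real list \<Rightarrow> real" and x :: "real list"
  assumes "1 < K" and "K < n"
    and "is_norm_on n N" and "sign_invariant n N" and "perm_invariant n N"
    and "length x = n"
  shows "feasible n K x (uvec n K x) \<and>
         (\<forall>v. feasible n K x v \<longrightarrow> N (uvec n K x) \<le> N v)"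
proof -
  have K: "0 < K" "K \<le> length x"
    using assms by simp_all
  define a where "a = rev (sort (absv x))"
  define q where "q = ix n K x - 1"
  define d where "d = delta n K x"
  interpret tail_average a K q d
    using tail_average_ix[OF K] assms(6) by (simp add: a_def q_def d_def)
  have "uvec n K x = cut"
    using uvec_eq_cut[OF K] assms(6) by (simp add: a_def q_def d_def)
  moreover have "length a = n"
    using assms(6) by (simp add: a_def absv_def)
  ultimately show ?thesis
    using feasible_cut[OF a_def] norm_cut_le_feasible[OF a_def] assms(3-5) by auto
qed

end
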